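(* Let $1\le k<d$ and let $t\ge 1$ be an integer. For every multi-index $\alpha\in\mathbb{N}^d$ with $|\alpha|=t$ there exist an integer $m\ge1$, vectors $y^\alpha_{s,i}\in\mathbb{S}^{d-1}$ and real coefficients $f^\alpha_{s,i}$ ($s=1,\dots,t$, $i=1,\dots,m$) such that $$x^\alpha=\sum_{s=1}^t\sum_{i=1}^m f^\alpha_{s,i}\,\mu^s_{k,d}(E_{x,y^\alpha_{s,i}})\qquad\text{for all }x\in\mathbb{S}^{d-1}.$$
   Context: $\mathscr{H}_d$ denotes the space of real symmetric $d\times d$ matrices with inner product $\langle A,B\rangle=\operatorname{trace}(AB)$. $\mathcal{G}_{k,d}=\{P\in\mathscr{H}_d:P^2=P,\ \operatorname{trace}(P)=k\}$ is the set of rank-$k$ orthogonal projections of $\mathbb{R}^d$, and $\sigma_{k,d}$ is the orthogonally invariant Borel probability measure on $\mathcal{G}_{k,d}$ (invariant under $P\mapsto UPU^*$, $U\in\mathcal{O}(d)$). For $M\in\mathscr{H}_d$, $\mu^s_{k,d}(M):=\int_{\mathcal{G}_{k,d}}\langle P,M\rangle^s\,d\sigma_{k,d}(P)$. For $x,y\in\mathbb{R}^d$, $E_{x,y}:=\tfrac12(xy^*+yx^* )$. For $\alpha\in\mathbb{N}^d$, $x^\alpha=x_1^{\alpha_1}\cdots x_d^{\alpha_d}$ and $|\alpha|=\sum_i\alpha_i$. *)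

theory Defs
  imports "HOL-Probability.Probability"
begin

text \<open>Matrices in H_d are real symmetric d x d matrices, represented as real^'n^'n
  with CARD('n) = d.  Inner product <A,B> = trace (A B).\<close>

definition hs_inner :: "real^'n^'n \<Rightarrow> real^'n^'n \<Rightarrow> real" where
  "hs_inner A B = trace (A ** B)"

definition grassmann_proj :: "nat \<Rightarrow> (real^'n^'n) set" where
  "grassmann_proj k = {P. transpose P = P \<and> P ** P = P \<and> trace P = real k}"

definition orth_inv_grassmann_measure :: "nat \<Rightarrow> (real^'n^'n) measure \<Rightarrow> bool" where
  "orth_inv_grassmann_measure k \<sigma> \<longleftrightarrow>
     prob_space \<sigma> \<and>
     space \<sigma> = grassmann_proj k \<and>
     sets \<sigma> = sets (restrict_space borel (grassmann_proj k)) \<and>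
     (\<forall>U. orthogonal_matrix U \<longrightarrow>
        (\<forall>A\<in>sets \<sigma>. emeasure \<sigma> ((\<lambda>P. U ** P ** transpose U) -` A \<inter> space \<sigma>) = emeasure \<sigma> A))"

definition moment :: "(real^'n^'n) measure \<Rightarrow> nat \<Rightarrow> real^'n^'n \<Rightarrow> real" where
  "moment \<sigma> s M = (\<integral>P. (hs_inner P M) ^ s \<partial>\<sigma>)"

definition Exy :: "real^'n \<Rightarrow> real^'n \<Rightarrow> real^'n^'n" where
  "Exy x y = (\<chi> i j. (x$i * y$j + y$i * x$j) / 2)"

definition monomial :: "real^'n \<Rightarrow> ('n \<Rightarrow> nat) \<Rightarrow> real" where
  "monomial x \<alpha> = (\<Prod>i\<in>UNIV. (x$i) ^ (\<alpha> i))"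

end

theory Submission
  imports Defs "HOL-Library.Function_Algebras"
begin

text \<open>Let \<open>H\<^sub>t\<close> be the span of the powers \<open>x \<mapsto> (a \<bullet> x)\<^sup>t\<close> of linear forms with \<open>\<parallel>a\<parallel> = 1\<close>.
  By polarization (iterated finite differences of \<open>c \<mapsto> c\<^sup>t\<close>) every product of \<open>t\<close> linear forms
  lies in \<open>H\<^sub>t\<close>, so \<open>H\<^sub>t\<close> is the finite-dimensional space of \<open>t\<close>-homogeneous polynomials and
  contains \<open>x\<^sup>\<alpha>\<close>. Averaging \<open>g \<mapsto> (x \<mapsto> \<integral> g (P x) d\<sigma>(P))\<close> maps \<open>H\<^sub>t\<close> into itself, and since
  \<open>\<langle>P, E\<^sub>x\<^sub>,\<^sub>a\<rangle> = a \<bullet> P x\<close> the average of \<open>(a \<bullet> x)\<^sup>t\<close> is \<open>x \<mapsto> \<mu>\<^sup>t\<^sub>k\<^sub>,\<^sub>d(E\<^sub>x\<^sub>,\<^sub>a)\<close>. The averaging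
  operator is injective on \<open>H\<^sub>t\<close> (positivity of a sum of squares together with orthogonal
  invariance of \<open>\<sigma>\<close>), hence onto, so \<open>x\<^sup>\<alpha>\<close> is the average of some \<open>\<Sum>\<^sub>i c\<^sub>i (a\<^sub>i \<bullet> x)\<^sup>t\<close>.\<close>

section \<open>Linear algebra on function spaces\<close>

instantiation "fun" :: (type, real_vector) real_vector
begin
definition scaleR_fun_def: "scaleR c f = (\<lambda>x. c *\<^sub>R f x)"
instance by standard (auto simp: scaleR_fun_def fun_eq_iff algebra_simps)
end

lemma scaleR_fun_apply [simp]: "(c *\<^sub>R f) x = c *\<^sub>R f x"
  by (simp add: scaleR_fun_def)

lemma sum_fun_apply [simp]: "(\<Sum>i\<in>I. f i) x = (\<Sum>i\<in>I. f i x)"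
  by (induction I rule: infinite_finite_induct) auto

lemma subspace_image:
  fixes f :: "'a::real_vector \<Rightarrow> 'b::real_vector"
  assumes S: "subspace S" "S \<subseteq> V"
    and add: "\<And>x y. x \<in> V \<Longrightarrow> y \<in> V \<Longrightarrow> f (x + y) = f x + f y"
    and scale: "\<And>c x. x \<in> V \<Longrightarrow> f (c *\<^sub>R x) = c *\<^sub>R f x"
  shows "subspace (f ` S)"
  unfolding subspace_def
proof (intro conjI ballI allI)
  have "0 \<in> S" using S(1) by (rule subspace_0)
  then show "0 \<in> f ` S"
    using scale[of 0 0] S(2) by (metis image_eqI scale_zero_left subsetD)
next
  fix x y assume "x \<in> f ` S" "y \<in> f ` S"
  then obtain x' y' where "x' \<in> S" "y' \<in> S" "x = f x'" "y = f y'"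
    by blast
  then show "x + y \<in> f ` S"
    using S add[of x' y'] subspace_add[of S x' y'] by (metis image_eqI subsetD)
next
  fix c x assume "x \<in> f ` S"
  then obtain x' where "x' \<in> S" "x = f x'"
    by blast
  then show "c *\<^sub>R x \<in> f ` S"
    using S scale[of x' c] subspace_scale[of S x' c] by (metis image_eqI subsetD)
qed

lemma span_image_subset_image_span:
  fixes f :: "'a::real_vector \<Rightarrow> 'b::real_vector"
  assumes "subspace V" "S \<subseteq> V"
    and add: "\<And>x y. x \<in> V \<Longrightarrow> y \<in> V \<Longrightarrow> f (x + y) = f x + f y"
    and scale: "\<And>c x. x \<in> V \<Longrightarrow> f (c *\<^sub>R x) = c *\<^sub>R f x"
  shows "span (f ` S) \<subseteq> f ` span S"
proof (rule span_minimal)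
  have "span S \<subseteq> V"
    using assms(1,2) by (simp add: span_minimal)
  then show "subspace (f ` span S)"
    using add scale by (intro subspace_image[of _ V] subspace_span) auto
qed (auto intro: span_base)

lemma independent_image_inj_on:
  fixes f :: "'a::real_vector \<Rightarrow> 'b::real_vector"
  assumes "subspace V" "C \<subseteq> V" "independent C"
    and add: "\<And>x y. x \<in> V \<Longrightarrow> y \<in> V \<Longrightarrow> f (x + y) = f x + f y"
    and scale: "\<And>c x. x \<in> V \<Longrightarrow> f (c *\<^sub>R x) = c *\<^sub>R f x"
    and inj: "inj_on f V"
  shows "independent (f ` C)"
  unfolding dependent_def
proof
  assume "\<exists>y\<in>f ` C. y \<in> span (f ` C - {y})"
  then obtain c where c: "c \<in> C" "f c \<in> span (f ` C - {f c})"
    by blast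
  have "f ` C - {f c} \<subseteq> f ` (C - {c})"
    by blast
  then have "f c \<in> f ` span (C - {c})"
    using c(2) span_mono span_image_subset_image_span[OF assms(1) _ add scale, of "C - {c}"] assms(2)
    by blast
  moreover have "span (C - {c}) \<subseteq> V"
    using assms(1,2) by (metis Diff_subset span_minimal subset_trans)
  ultimately have "c \<in> span (C - {c})"
    using inj c(1) assms(2) by (auto dest: inj_onD)
  then show False
    using assms(3) c(1) by (auto simp: dependent_def)
qed

text \<open>Unlike the library versions, \<open>f\<close> need only be linear on the subspace: the averaging operator
  below is additive only where the integrals exist.\<close>

lemma inj_on_span_imp_image_eq:
  fixes f :: "'a::real_vector \<Rightarrow> 'a"
  assumes "finite B"
    and into: "f ` span B \<subseteq> span B"
    and add: "\<And>x y. x \<in> span B \<Longrightarrow> y \<in> span B \<Longrightarrow> f (x + y) = f x + f y"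
    and scale: "\<And>c x. x \<in> span B \<Longrightarrow> f (c *\<^sub>R x) = c *\<^sub>R f x"
    and inj: "inj_on f (span B)"
  shows "f ` span B = span B"
proof -
  obtain C where C: "C \<subseteq> B" "independent C" "B \<subseteq> span C"
    using maximal_independent_subset by blast
  have "finite C"
    using C(1) \<open>finite B\<close> by (rule finite_subset)
  have C_span: "C \<subseteq> span B"
    using C(1) span_superset by blast
  have span_C: "span C = span B"
    using C_span span_minimal[OF C(3) subspace_span] by (intro span_subspace) auto
  have indep: "independent (f ` C)"
    by (rule independent_image_inj_on[OF subspace_span C_span C(2) add scale inj])
  have "span B \<subseteq> span (f ` C)"
  proof
    fix x assume x: "x \<in> span B"
    show "x \<in> span (f ` C)"
    proof (rule ccontr)
      assume x_notin: "x \<notin> span (f ` C)"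
      then have "x \<notin> f ` C"
        by (meson span_base)
      moreover have "card (f ` C) = card C"
        using inj_on_subset[OF inj C_span] by (rule card_image)
      ultimately have "card (insert x (f ` C)) = Suc (card C)"
        using \<open>finite C\<close> by simp
      moreover have "independent (insert x (f ` C))"
        using indep x_notin by (simp add: independent_insert)
      moreover have "insert x (f ` C) \<subseteq> span C"
        using x into C_span span_C by auto
      ultimately show False
        using independent_span_bound[OF \<open>finite C\<close>] by (metis Suc_n_not_le_n)
    qed
  qed
  also have "\<dots> \<subseteq> f ` span B"
    using span_image_subset_image_span[OF subspace_span C_span add scale] span_C by simp
  finally show ?thesis
    using into by blast
qed

lemma span_image_indexed_sum:
  fixes f :: "'a \<Rightarrow> 'b::real_vector"
  assumes g: "g \<in> span (f ` U)" and "U \<noteq> {}"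
  obtains m :: nat and a c where "1 \<le> m" "\<And>i. a i \<in> U" "g = (\<Sum>i=1..m. c i *\<^sub>R f (a i))"
proof -
  obtain S u where S: "finite S" "S \<subseteq> f ` U" and g_eq: "g = (\<Sum>v\<in>S. u v *\<^sub>R v)"
    using g unfolding span_explicit by blast
  obtain e where e: "bij_betw e {1..card S} S"
    using ex_bij_betw_nat_finite_1[OF S(1)] by blast
  obtain u0 where u0: "u0 \<in> U"
    using \<open>U \<noteq> {}\<close> by blast
  define pre where "pre v = (SOME a. a \<in> U \<and> f a = v)" for v
  have pre: "pre v \<in> U" "f (pre v) = v" if "v \<in> S" for v
    using someI_ex[of "\<lambda>a. a \<in> U \<and> f a = v"] S(2) that by (auto simp: pre_def)
  define a where "a i = (if i \<in> {1..card S} then pre (e i) else u0)" for i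
  define c where "c i = (if i \<in> {1..card S} then u (e i) else 0)" for i
  have e_in: "e i \<in> S" if "i \<in> {1..card S}" for i
    using e that by (auto simp: bij_betw_def)
  show ?thesis
  proof (rule that)
    show "a i \<in> U" for i
      using pre(1) e_in u0 by (simp add: a_def)
    have "g = (\<Sum>i=1..card S. u (e i) *\<^sub>R e i)"
      unfolding g_eq by (rule sum.reindex_bij_betw[OF e, symmetric])
    also have "\<dots> = (\<Sum>i=1..card S. c i *\<^sub>R f (a i))"
      by (intro sum.cong refl) (simp add: a_def c_def pre e_in)
    also have "\<dots> = (\<Sum>i=1..Suc (card S). c i *\<^sub>R f (a i))"
      by (simp add: c_def)
    finally show "g = (\<Sum>i=1..Suc (card S). c i *\<^sub>R f (a i))" .
  qed simp
qed

section \<open>Homogeneous polynomials and powers of linear forms\<close>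

fun forward_diff :: "real list \<Rightarrow> (real \<Rightarrow> real) \<Rightarrow> real \<Rightarrow> real" where
  "forward_diff [] f c = f c"
| "forward_diff (u # us) f c = forward_diff us f (c + u) - forward_diff us f c"

lemma forward_diff_sum:
  assumes "finite K"
  shows "forward_diff us (\<lambda>c. \<Sum>k\<in>K. r k * f k c) c = (\<Sum>k\<in>K. r k * forward_diff us (f k) c)"
  by (induction us arbitrary: c) (simp_all add: sum_subtractf right_diff_distrib)

lemma forward_diff_shift: "forward_diff us (\<lambda>c. f (c + u)) c = forward_diff us f (c + u)"
  by (induction us arbitrary: c) (simp_all add: add_ac)

lemma forward_diff_power:
  assumes "m \<le> length us"
  shows "forward_diff us (\<lambda>c. c ^ m) c = (if m = length us then fact m * prod_list us else 0)"
  using assms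
proof (induction us arbitrary: m c)
  case Nil
  then show ?case by simp
next
  case (Cons u us)
  define b where "b k = real (m choose k) * u ^ (m - k)" for k
  have "forward_diff (u # us) (\<lambda>c. c ^ m) c = forward_diff us (\<lambda>c. (c + u) ^ m) c - forward_diff us (\<lambda>c. c ^ m) c"
    using forward_diff_shift[of us "\<lambda>c. c ^ m" u c] by simp
  also have "\<dots> = (\<Sum>k\<le>m. b k * forward_diff us (\<lambda>c. c ^ k) c) - forward_diff us (\<lambda>c. c ^ m) c"
  proof -
    have "(\<lambda>c. (c + u) ^ m) = (\<lambda>c. \<Sum>k\<le>m. b k * c ^ k)"
      by (simp add: fun_eq_iff binomial_ring b_def mult_ac)
    then show ?thesis
      using forward_diff_sum[of "{..m}" us b "\<lambda>k c. c ^ k" c] by simp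
  qed
  also have "\<dots> = (\<Sum>k<m. b k * forward_diff us (\<lambda>c. c ^ k) c)"
    by (simp add: lessThan_Suc_atMost[symmetric] b_def)
  also have "\<dots> = (\<Sum>k<m. if k = length us then b k * (fact k * prod_list us) else 0)"
    using Cons by (intro sum.cong) auto
  also have "\<dots> = (if length us < m then b (length us) * (fact (length us) * prod_list us) else 0)"
    by (simp add: sum.delta)
  also have "\<dots> = (if m = length (u # us) then fact m * prod_list (u # us) else 0)"
    using Cons.prems by (cases "m = Suc (length us)") (simp_all add: b_def binomial_Suc_n)
  finally show ?case .
qed

definition power_form :: "real^'n \<Rightarrow> nat \<Rightarrow> real^'n \<Rightarrow> real" where
  "power_form a t x = inner a x ^ t"

definition power_forms :: "nat \<Rightarrow> (real^'n \<Rightarrow> real) set" where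
  "power_forms t = span ((\<lambda>a. power_form a t) ` sphere 0 1)"

definition words :: "nat \<Rightarrow> (nat \<Rightarrow> 'n::finite) set" where
  "words t = PiE {..<t} (\<lambda>_. UNIV)"

definition word_monomial :: "nat \<Rightarrow> (nat \<Rightarrow> 'n) \<Rightarrow> real^'n \<Rightarrow> real" where
  "word_monomial t w x = (\<Prod>l<t. x $ w l)"

lemma finite_words [simp]: "finite (words t)"
  unfolding words_def by (intro finite_PiE) auto

lemma power_sum_words:
  fixes f :: "'n::finite \<Rightarrow> real"
  shows "(\<Sum>j\<in>UNIV. f j) ^ t = (\<Sum>w\<in>words t. \<Prod>l<t. f (w l))"
proof -
  have "(\<Sum>j\<in>UNIV. f j) ^ t = (\<Prod>l<t. \<Sum>j\<in>UNIV. f j)"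
    by simp
  also have "\<dots> = (\<Sum>w\<in>words t. \<Prod>l<t. f (w l))"
    unfolding words_def using prod_sum_PiE[of "{..<t}" "\<lambda>_. UNIV" "\<lambda>_ j. f j"] by simp
  finally show ?thesis .
qed

lemma inner_power_words:
  "inner a x ^ t = (\<Sum>w\<in>words t. word_monomial t w a * word_monomial t w x)"
  by (simp add: inner_vec_def power_sum_words word_monomial_def prod.distrib)

lemma word_monomial_matrix_vector:
  fixes P :: "real^'n^'n"
  shows "word_monomial t w (P *v x) = (\<Sum>v\<in>words t. (\<Prod>l<t. P $ w l $ v l) * word_monomial t v x)"
proof -
  have "word_monomial t w (P *v x) = (\<Prod>l<t. \<Sum>j\<in>UNIV. P $ w l $ j * x $ j)"
    by (simp add: word_monomial_def matrix_vector_mult_def)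
  also have "\<dots> = (\<Sum>v\<in>words t. \<Prod>l<t. P $ w l $ v l * x $ v l)"
    unfolding words_def by (rule prod_sum_PiE) auto
  finally show ?thesis
    by (simp add: word_monomial_def prod.distrib)
qed

lemma power_form_in_power_forms:
  assumes "1 \<le> t"
  shows "power_form a t \<in> power_forms t"
proof (cases "a = 0")
  case True
  then have "power_form a t = 0"
    using assms by (auto simp: power_form_def fun_eq_iff)
  then show ?thesis
    by (simp add: power_forms_def span_zero)
next
  case False
  have "power_form a t = norm a ^ t *\<^sub>R power_form (a /\<^sub>R norm a) t"
    using False
    by (simp add: fun_eq_iff power_form_def power_mult_distrib[symmetric] mult.assoc[symmetric])
  moreover have "power_form (a /\<^sub>R norm a) t \<in> power_forms t"
    unfolding power_forms_def by (rule span_base) (use False in auto)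
  ultimately show ?thesis
    by (simp add: power_forms_def span_scale)
qed

lemma power_forms_homogeneous:
  assumes "g \<in> power_forms t"
  shows "g (r *\<^sub>R x) = r ^ t * g x"
  using assms unfolding power_forms_def
proof (induction rule: span_induct)
  case base
  show ?case
    by (auto simp: subspace_def algebra_simps)
qed (auto simp: power_form_def power_mult_distrib)

lemma power_forms_nonzero_on_sphere:
  assumes "1 \<le> t" "g \<in> power_forms t" "g \<noteq> 0"
  obtains z where "norm z = 1" "g z \<noteq> 0"
proof -
  obtain z0 where z0: "g z0 \<noteq> 0"
    using assms(3) by (auto simp: fun_eq_iff)
  have "g 0 = 0"
    using power_forms_homogeneous[OF assms(2), of 0 0] assms(1) by (simp add: power_0_left)
  then have "z0 \<noteq> 0"
    using z0 by auto
  moreover have "g z0 = norm z0 ^ t * g (z0 /\<^sub>R norm z0)"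
    using power_forms_homogeneous[OF assms(2), of "norm z0" "z0 /\<^sub>R norm z0"] \<open>z0 \<noteq> 0\<close> by simp
  ultimately show ?thesis
    using z0 that[of "z0 /\<^sub>R norm z0"] by auto
qed

lemma power_forms_indexed_sum:
  assumes "g \<in> power_forms t"
  obtains m :: nat and a c where "1 \<le> m" "\<And>i. norm (a i) = 1"
    "g = (\<Sum>i=1..m. c i *\<^sub>R power_form (a i) t)"
proof -
  have "sphere (0 :: real^'n) 1 \<noteq> {}"
    by simp
  then obtain m :: nat and a c where m: "1 \<le> m" and a: "\<And>i. a i \<in> sphere 0 1"
    and g: "g = (\<Sum>i=1..m. c i *\<^sub>R power_form (a i) t)"
    using span_image_indexed_sum[OF assms[unfolded power_forms_def]] by blast
  show ?thesis
    by (rule that[OF m _ g]) (use a in simp)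
qed

text \<open>Polarization: the \<open>t\<close>-th forward difference of \<open>c \<mapsto> c ^ t\<close> in the directions
  \<open>v\<^sub>1 \<bullet> x, \<dots>, v\<^sub>t \<bullet> x\<close> is \<open>t! \<Prod>\<^sub>l (v\<^sub>l \<bullet> x)\<close>, and every intermediate difference, as a function of \<open>x\<close>,
  is a combination of powers of linear forms.\<close>

lemma prod_inner_in_power_forms:
  assumes "1 \<le> t" "length vs = t"
  shows "(\<lambda>x. prod_list (map (\<lambda>v. inner v x) vs)) \<in> power_forms t"
proof -
  have diff: "(\<lambda>x. forward_diff (map (\<lambda>v. inner v x) us) (\<lambda>c. c ^ t) (inner a x)) \<in> power_forms t"
    for us :: "(real^'n) list" and a :: "real^'n"
  proof (induction us arbitrary: a)
    case Nil
    then show ?case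
      using power_form_in_power_forms[OF assms(1), of a] by (simp add: power_form_def[abs_def])
  next
    case (Cons v us)
    let ?F = "\<lambda>a x. forward_diff (map (\<lambda>v. inner v x) us) (\<lambda>c. c ^ t) (inner a x)"
    have "(\<lambda>x. forward_diff (map (\<lambda>v. inner v x) (v # us)) (\<lambda>c. c ^ t) (inner a x))
        = ?F (a + v) - ?F a"
      by (simp add: fun_eq_iff inner_add_left)
    then show ?case
      using Cons.IH[of "a + v"] Cons.IH[of a] by (simp add: power_forms_def span_diff)
  qed
  have "(\<lambda>x. prod_list (map (\<lambda>v. inner v x) vs))
      = (1 / fact t) *\<^sub>R (\<lambda>x. forward_diff (map (\<lambda>v. inner v x) vs) (\<lambda>c. c ^ t) (inner 0 x))"
    using assms(2) by (simp add: fun_eq_iff forward_diff_power)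
  also have "\<dots> \<in> power_forms t"
    unfolding power_forms_def by (intro span_scale diff[unfolded power_forms_def])
  finally show ?thesis .
qed

lemma word_monomial_in_power_forms:
  assumes "1 \<le> t"
  shows "word_monomial t w \<in> power_forms t"
proof -
  have "word_monomial t w = (\<lambda>x. prod_list (map (\<lambda>v. inner v x) (map (\<lambda>l. axis (w l) 1) [0..<t])))"
    by (simp add: fun_eq_iff word_monomial_def inner_axis' prod.distinct_set_conv_list[symmetric]
        atLeast0LessThan)
  also have "\<dots> \<in> power_forms t"
    by (rule prod_inner_in_power_forms[OF assms]) simp
  finally show ?thesis .
qed

lemma power_forms_eq_span_monomials:
  assumes "1 \<le> t"
  shows "power_forms t = span (word_monomial t ` words t)"
proof
  have "power_form a t \<in> span (word_monomial t ` words t)" for a :: "real^'n"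
  proof -
    have "power_form a t = (\<Sum>w\<in>words t. word_monomial t w a *\<^sub>R word_monomial t w)"
      by (simp add: fun_eq_iff power_form_def inner_power_words)
    then show ?thesis
      by (simp add: span_sum span_scale span_base)
  qed
  then show "power_forms t \<subseteq> span (word_monomial t ` words t)"
    unfolding power_forms_def by (intro span_minimal) auto
  show "span (word_monomial t ` words t) \<subseteq> power_forms t"
    using word_monomial_in_power_forms[OF assms]
    by (intro span_minimal) (auto simp: power_forms_def)
qed

lemma monomial_in_power_forms:
  fixes \<alpha> :: "'n::finite \<Rightarrow> nat"
  assumes "1 \<le> t" "(\<Sum>i\<in>UNIV. \<alpha> i) = t"
  shows "(\<lambda>x::real^'n. monomial x \<alpha>) \<in> power_forms t"
proof -
  obtain xs :: "'n list" where xs: "set xs = UNIV" "distinct xs"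
    using finite_distinct_list[OF finite_class.finite_UNIV] by blast
  define vs where "vs = concat (map (\<lambda>i. replicate (\<alpha> i) (axis i (1::real))) xs)"
  have "length vs = sum_list (map \<alpha> xs)"
    by (simp add: vs_def length_concat o_def)
  also have "\<dots> = t"
    using assms(2) xs by (simp add: sum.distinct_set_conv_list[symmetric])
  finally have "length vs = t" .
  moreover have "monomial x \<alpha> = prod_list (map (\<lambda>v. inner v x) vs)" for x :: "real^'n"
  proof -
    have concat: "prod_list (map g (concat (map h ys))) = prod_list (map (\<lambda>i. prod_list (map g (h i))) ys)"
      for g :: "real^'n \<Rightarrow> real" and h and ys :: "'n list"
      by (induction ys) simp_all
    have "monomial x \<alpha> = (\<Prod>i\<in>set xs. x $ i ^ \<alpha> i)"
      using xs(1) by (simp add: monomial_def)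
    also have "\<dots> = prod_list (map (\<lambda>i. x $ i ^ \<alpha> i) xs)"
      by (rule prod.distinct_set_conv_list[OF xs(2)])
    finally show ?thesis
      by (simp add: vs_def concat inner_axis')
  qed
  ultimately show ?thesis
    using prod_inner_in_power_forms[OF assms(1)] by simp
qed

section \<open>Orthogonal projections\<close>

lemma grassmann_projD:
  assumes "P \<in> grassmann_proj k"
  shows "transpose P = P" "P ** P = P" "trace P = real k"
  using assms by (auto simp: grassmann_proj_def)

lemma inner_symmetric_matrix:
  fixes P :: "real^'n^'n"
  assumes "transpose P = P"
  shows "inner x (P *v y) = inner (P *v x) y"
  by (metis assms dot_lmul_matrix vector_transpose_matrix)

lemma grassmann_proj_inner:
  assumes "P \<in> grassmann_proj k"
  shows "inner x (P *v y) = inner (P *v x) (P *v y)"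
proof -
  have "inner x (P *v y) = inner x (P *v (P *v y))"
    by (simp add: matrix_vector_mul_assoc grassmann_projD(2)[OF assms])
  then show ?thesis
    by (simp add: inner_symmetric_matrix grassmann_projD(1)[OF assms])
qed

lemma grassmann_proj_norm_le:
  assumes "P \<in> grassmann_proj k"
  shows "norm (P *v x) \<le> norm x"
proof -
  have "norm (P *v x) * norm (P *v x) = inner x (P *v x)"
    using grassmann_proj_inner[OF assms, of x x] by (simp add: norm_eq_sqrt_inner)
  also have "\<dots> \<le> norm x * norm (P *v x)"
    by (rule norm_cauchy_schwarz)
  finally show ?thesis
    by (metis mult_right_le_imp_le norm_ge_zero order_le_less zero_le_mult_iff)
qed

lemma grassmann_proj_entry_bound:
  assumes "P \<in> grassmann_proj k"
  shows "\<bar>P $ i $ j\<bar> \<le> 1"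
proof -
  have "\<bar>P $ i $ j\<bar> = \<bar>(P *v axis j 1) $ i\<bar>"
    by (simp add: matrix_vector_mult_basis column_def)
  also have "\<dots> \<le> norm (P *v axis j 1)"
    by (rule component_le_norm_cart)
  also have "\<dots> \<le> 1"
    using grassmann_proj_norm_le[OF assms, of "axis j 1"] by simp
  finally show ?thesis .
qed

lemma grassmann_proj_conjugate:
  assumes U: "orthogonal_matrix U" and P: "P \<in> grassmann_proj k"
  shows "U ** P ** transpose U \<in> grassmann_proj k"
proof -
  have UU: "transpose U ** U = mat 1"
    using U by (simp add: orthogonal_matrix)
  note P = grassmann_projD[OF P]
  have "transpose (U ** P ** transpose U) = U ** P ** transpose U"
    by (simp add: matrix_transpose_mul P(1) matrix_mul_assoc)
  moreover have "(U ** P ** transpose U) ** (U ** P ** transpose U) = U ** P ** transpose U"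
  proof -
    have "(U ** P ** transpose U) ** (U ** P ** transpose U) = U ** P ** (transpose U ** U) ** P ** transpose U"
      by (simp add: matrix_mul_assoc)
    also have "\<dots> = U ** (P ** P) ** transpose U"
      by (simp add: UU matrix_mul_assoc)
    finally show ?thesis
      by (simp add: P(2))
  qed
  moreover have "trace (U ** P ** transpose U) = real k"
    using trace_mul_sym[of "U ** P" "transpose U"] by (simp add: matrix_mul_assoc UU P(3))
  ultimately show ?thesis
    by (simp add: grassmann_proj_def)
qed

lemma grassmann_proj_fixed_unit:
  assumes P: "P \<in> grassmann_proj k" and "1 \<le> k"
  obtains u where "norm u = 1" "P *v u = u"
proof -
  have "\<exists>j. P *v axis j 1 \<noteq> 0"
  proof (rule ccontr)
    assume "\<not> ?thesis"
    then have "P $ i $ j = 0" for i j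
      by (metis column_def matrix_vector_mult_basis vec_lambda_beta zero_index)
    then have "trace P = 0"
      by (simp add: trace_def)
    then show False
      using grassmann_projD(3)[OF P] \<open>1 \<le> k\<close> by simp
  qed
  then obtain j where nz: "P *v axis j 1 \<noteq> 0"
    by blast
  define v where "v = P *v axis j 1"
  have "P *v v = v"
    unfolding v_def by (simp add: matrix_vector_mul_assoc grassmann_projD(2)[OF P])
  then show ?thesis
    using nz that[of "v /\<^sub>R norm v"] by (simp add: v_def matrix_vector_mult_scaleR)
qed

lemma orthogonal_matrix_map:
  fixes u z :: "real^'n"
  assumes "norm u = norm z"
  obtains U where "orthogonal_matrix U" "U *v u = z"
proof -
  obtain f where f: "orthogonal_transformation f" "f u = z"
    using orthogonal_transformation_exists[OF assms] by blast
  then have "linear f" "orthogonal_matrix (matrix f)"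
    by (simp_all add: orthogonal_transformation_matrix)
  then show ?thesis
    using that f(2) by (simp add: matrix_works)
qed

lemma grassmann_proj_conjugate_fixing:
  assumes P: "P \<in> grassmann_proj k" and "1 \<le> k" and "norm z = 1"
  obtains U where "orthogonal_matrix U" "(U ** P ** transpose U) *v z = z"
proof -
  obtain u where u: "norm u = 1" "P *v u = u"
    using grassmann_proj_fixed_unit[OF P \<open>1 \<le> k\<close>] .
  obtain U where U: "orthogonal_matrix U" "U *v u = z"
    using orthogonal_matrix_map[of u z] u(1) \<open>norm z = 1\<close> by auto
  have "transpose U *v z = u"
    using U by (metis matrix_vector_mul_assoc matrix_vector_mul_lid orthogonal_matrix)
  then have "(U ** P ** transpose U) *v z = z"
    by (simp add: matrix_vector_mul_assoc[symmetric] u(2) U(2))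
  then show ?thesis
    using that U(1) by blast
qed

lemma hs_inner_Exy:
  fixes P :: "real^'n^'n"
  assumes "transpose P = P"
  shows "hs_inner P (Exy x y) = inner y (P *v x)"
proof -
  have "hs_inner P (Exy x y) = (\<Sum>i\<in>UNIV. \<Sum>j\<in>UNIV. P $ i $ j * ((x $ j * y $ i + y $ j * x $ i) / 2))"
    by (simp add: hs_inner_def trace_def matrix_matrix_mult_def Exy_def)
  also have "\<dots> = (\<Sum>i\<in>UNIV. \<Sum>j\<in>UNIV. (y $ i * (P $ i $ j * x $ j) + x $ i * (P $ i $ j * y $ j)) / 2)"
    by (intro sum.cong refl) (simp add: field_simps)
  also have "\<dots> = ((\<Sum>i\<in>UNIV. \<Sum>j\<in>UNIV. y $ i * (P $ i $ j * x $ j))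
                 + (\<Sum>i\<in>UNIV. \<Sum>j\<in>UNIV. x $ i * (P $ i $ j * y $ j))) / 2"
    by (simp only: add_divide_distrib sum.distrib sum_divide_distrib)
  also have "\<dots> = (inner y (P *v x) + inner x (P *v y)) / 2"
    by (simp add: inner_vec_def matrix_vector_mult_def sum_distrib_left)
  finally show ?thesis
    using inner_symmetric_matrix[OF assms, of x y] by (simp add: inner_commute)
qed

lemma power_sum_symmetric_matrix:
  fixes P :: "real^'n^'n" and a :: "'i \<Rightarrow> real^'n"
  assumes "transpose P = P"
  shows "(\<Sum>i\<in>I. c i * inner (a i) (P *v x) ^ t)
       = (\<Sum>w\<in>words t. (\<Sum>i\<in>I. c i * word_monomial t w (P *v a i)) * word_monomial t w x)"
proof -
  have "(\<Sum>i\<in>I. c i * inner (a i) (P *v x) ^ t)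
      = (\<Sum>i\<in>I. \<Sum>w\<in>words t. c i * word_monomial t w (P *v a i) * word_monomial t w x)"
    by (simp add: inner_symmetric_matrix[OF assms] inner_power_words sum_distrib_left mult.assoc)
  also have "\<dots> = (\<Sum>w\<in>words t. \<Sum>i\<in>I. c i * word_monomial t w (P *v a i) * word_monomial t w x)"
    by (rule sum.swap)
  also have "\<dots> = (\<Sum>w\<in>words t. (\<Sum>i\<in>I. c i * word_monomial t w (P *v a i)) * word_monomial t w x)"
    by (simp add: sum_distrib_right)
  finally show ?thesis .
qed

text \<open>Idempotence gives \<open>a\<^sub>i \<bullet> P a\<^sub>j = P a\<^sub>i \<bullet> P a\<^sub>j\<close>, which turns the form into a sum of squares.\<close>

lemma power_sum_projection_sum_squares:
  fixes a :: "'i \<Rightarrow> real^'n"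
  assumes P: "P \<in> grassmann_proj k"
  shows "(\<Sum>j\<in>I. c j * (\<Sum>i\<in>I. c i * inner (a i) (P *v a j) ^ t))
       = (\<Sum>w\<in>words t. (\<Sum>i\<in>I. c i * word_monomial t w (P *v a i))\<^sup>2)"
proof -
  let ?h = "\<lambda>w. \<Sum>i\<in>I. c i * word_monomial t w (P *v a i)"
  have "(\<Sum>i\<in>I. c i * inner (a i) (P *v a j) ^ t) = (\<Sum>w\<in>words t. ?h w * word_monomial t w (P *v a j))"
    for j
    using power_sum_symmetric_matrix[OF grassmann_projD(1)[OF P], of c a "P *v a j" t I]
    by (simp add: matrix_vector_mul_assoc grassmann_projD(2)[OF P])
  then have "(\<Sum>j\<in>I. c j * (\<Sum>i\<in>I. c i * inner (a i) (P *v a j) ^ t))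
      = (\<Sum>j\<in>I. \<Sum>w\<in>words t. ?h w * (c j * word_monomial t w (P *v a j)))"
    by (simp add: sum_distrib_left mult_ac)
  also have "\<dots> = (\<Sum>w\<in>words t. ?h w * ?h w)"
    by (subst sum.swap) (simp add: sum_distrib_left)
  finally show ?thesis
    by (simp add: power2_eq_square)
qed

lemma power_sum_projection_nonneg:
  assumes "P \<in> grassmann_proj k"
  shows "0 \<le> (\<Sum>j\<in>I. c j * (\<Sum>i\<in>I. c i * inner (a i) (P *v a j) ^ t))"
  unfolding power_sum_projection_sum_squares[OF assms] by (simp add: sum_nonneg)

lemma power_sum_projection_eq_0:
  assumes P: "P \<in> grassmann_proj k"
    and "(\<Sum>j\<in>I. c j * (\<Sum>i\<in>I. c i * inner (a i) (P *v a j) ^ t)) = 0"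
  shows "(\<Sum>i\<in>I. c i * inner (a i) (P *v x) ^ t) = 0"
proof -
  let ?h = "\<lambda>w. \<Sum>i\<in>I. c i * word_monomial t w (P *v a i)"
  have "(\<Sum>w\<in>words t. (?h w)\<^sup>2) = 0"
    using assms(2) by (simp only: power_sum_projection_sum_squares[OF P])
  then have "?h w = 0" if "w \<in> words t" for w
    using that sum_nonneg_eq_0_iff[OF finite_words[of t], of "\<lambda>w. (?h w)\<^sup>2"] by simp
  then show ?thesis
    by (simp add: power_sum_symmetric_matrix[OF grassmann_projD(1)[OF P]])
qed

section \<open>Averaging over the Grassmannian\<close>

locale grassmann_measure =
  fixes \<sigma> :: "(real^'n^'n) measure" and k :: nat
  assumes orth_inv: "orth_inv_grassmann_measure k \<sigma>" and rank_pos: "1 \<le> k"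
begin

sublocale prob_space \<sigma>
  using orth_inv by (simp add: orth_inv_grassmann_measure_def)

lemma space_eq: "space \<sigma> = grassmann_proj k"
  using orth_inv by (simp add: orth_inv_grassmann_measure_def)

lemma emeasure_conjugate_vimage:
  assumes "orthogonal_matrix U" "A \<in> sets \<sigma>"
  shows "emeasure \<sigma> ((\<lambda>P. U ** P ** transpose U) -` A \<inter> space \<sigma>) = emeasure \<sigma> A"
  using orth_inv assms unfolding orth_inv_grassmann_measure_def by blast

lemma continuous_imp_measurable:
  assumes "continuous_on UNIV f"
  shows "f \<in> borel_measurable \<sigma>"
proof -
  have "sets \<sigma> = sets (restrict_space borel (grassmann_proj k))"
    using orth_inv by (simp add: orth_inv_grassmann_measure_def)
  then show ?thesis
    using assms by (subst measurable_cong_sets[OF _ refl])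
      (auto intro!: measurable_restrict_space1 borel_measurable_continuous_onI)
qed

lemma continuous_nonzero_set_measurable:
  assumes "continuous_on UNIV (f :: real^'n^'n \<Rightarrow> real)"
  shows "{P \<in> space \<sigma>. f P \<noteq> 0} \<in> sets \<sigma>"
  using continuous_imp_measurable[OF assms] by measurable

lemma AE_imp_ex:
  assumes "AE P in \<sigma>. Q P"
  shows "\<exists>P\<in>space \<sigma>. Q P"
proof (rule ccontr)
  assume none: "\<not> (\<exists>P\<in>space \<sigma>. Q P)"
  have "AE P in \<sigma>. False"
    using assms by (rule AE_mp[OF _ AE_I2]) (use none in blast)
  then show False
    by (simp add: AE_False)
qed

lemma integrable_entry_product: "integrable \<sigma> (\<lambda>P. \<Prod>l<t. P $ r l $ s l)"
proof (rule integrable_const_bound[where B = 1])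
  show "AE P in \<sigma>. norm (\<Prod>l<t. P $ r l $ s l) \<le> 1"
    by (intro AE_I2) (auto simp: space_eq abs_prod grassmann_proj_entry_bound intro!: prod_le_1)
  show "(\<lambda>P. \<Prod>l<t. P $ r l $ s l) \<in> borel_measurable \<sigma>"
    by (intro continuous_imp_measurable continuous_intros)
qed

definition average :: "(real^'n \<Rightarrow> real) \<Rightarrow> real^'n \<Rightarrow> real" where
  "average g x = (\<integral>P. g (P *v x) \<partial>\<sigma>)"

lemma integrable_power_forms:
  assumes "1 \<le> t" "g \<in> power_forms t"
  shows "integrable \<sigma> (\<lambda>P. g (P *v x))"
  using assms(2) unfolding power_forms_eq_span_monomials[OF assms(1)]
proof (induction rule: span_induct)
  case base
  show ?case
    by (auto simp: subspace_def)
qed (auto simp: word_monomial_matrix_vector integrable_entry_product)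

lemma average_add:
  assumes "1 \<le> t" "g \<in> power_forms t" "h \<in> power_forms t"
  shows "average (g + h) = average g + average h"
  using integrable_power_forms[OF assms(1)] assms(2,3) by (simp add: fun_eq_iff average_def)

lemma average_scaleR: "average (c *\<^sub>R g) = c *\<^sub>R average g"
  by (simp add: fun_eq_iff average_def)

lemma average_word_monomial:
  "average (word_monomial t w)
     = (\<Sum>v\<in>words t. (\<integral>P. (\<Prod>l<t. P $ w l $ v l) \<partial>\<sigma>) *\<^sub>R word_monomial t v)"
  by (simp add: fun_eq_iff average_def word_monomial_matrix_vector integrable_entry_product)

lemma average_in_power_forms:
  assumes t: "1 \<le> t" and g: "g \<in> power_forms t"
  shows "average g \<in> power_forms t"
proof -
  let ?V = "span (word_monomial t ` words t)"
  have V: "power_forms t = ?V"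
    by (rule power_forms_eq_span_monomials[OF t])
  have "subspace {g \<in> ?V. average g \<in> ?V}"
    unfolding subspace_def
  proof (intro conjI ballI allI)
    show "0 \<in> {g \<in> ?V. average g \<in> ?V}"
      using average_scaleR[of 0 0] by (simp add: span_zero)
    show "g + h \<in> {g \<in> ?V. average g \<in> ?V}" if "g \<in> {g \<in> ?V. average g \<in> ?V}"
      "h \<in> {g \<in> ?V. average g \<in> ?V}" for g h
      using that average_add[OF t, of g h] by (simp add: V span_add)
    show "c *\<^sub>R g \<in> {g \<in> ?V. average g \<in> ?V}" if "g \<in> {g \<in> ?V. average g \<in> ?V}" for c g
      using that by (simp add: average_scaleR span_scale)
  qed
  moreover have "average (word_monomial t w) \<in> ?V" if "w \<in> words t" for w
    unfolding average_word_monomial by (intro span_sum span_scale span_base) auto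
  ultimately have "{g \<in> ?V. average g \<in> ?V} \<supseteq> ?V"
    by (intro span_minimal) (auto intro: span_base)
  then show ?thesis
    using g V by blast
qed


text \<open>The exceptional null sets \<open>{P. \<phi> (U P U\<^sup>T) \<noteq> 0}\<close> are open, so by Lindelof countably many
  of them cover their union over all orthogonal \<open>U\<close>.\<close>

lemma AE_conjugates:
  assumes cont: "continuous_on UNIV \<phi>" and ae: "AE P in \<sigma>. \<phi> P = 0"
  shows "AE P in \<sigma>. \<forall>U. orthogonal_matrix U \<longrightarrow> \<phi> (U ** P ** transpose U) = (0::real)"
proof -
  have cont_mult: "continuous_on UNIV (\<lambda>P :: real^'n^'n. U ** P ** transpose U)" for U :: "real^'n^'n"
    unfolding matrix_matrix_mult_def by (auto intro!: continuous_intros)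
  have cont_conj: "continuous_on UNIV (\<lambda>P. \<phi> (U ** P ** transpose U))" for U :: "real^'n^'n"
    by (rule continuous_on_compose2[OF cont cont_mult]) simp
  define N where "N = {P \<in> space \<sigma>. \<phi> P \<noteq> 0}"
  have N_sets: "N \<in> sets \<sigma>"
    unfolding N_def by (rule continuous_nonzero_set_measurable[OF cont])
  have N_null: "emeasure \<sigma> N = 0"
    using AE_iff_measurable[OF N_sets, of "\<lambda>P. \<phi> P = 0"] ae by (simp add: N_def)
  have conj: "AE P in \<sigma>. \<phi> (U ** P ** transpose U) = 0" if U: "orthogonal_matrix U" for U
  proof -
    have "{P \<in> space \<sigma>. \<phi> (U ** P ** transpose U) \<noteq> 0} = (\<lambda>P. U ** P ** transpose U) -` N \<inter> space \<sigma>"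
      using grassmann_proj_conjugate[OF U] by (auto simp: N_def space_eq)
    then have "emeasure \<sigma> {P \<in> space \<sigma>. \<phi> (U ** P ** transpose U) \<noteq> 0} = 0"
      using emeasure_conjugate_vimage[OF U N_sets] N_null by simp
    then show ?thesis
      using AE_iff_measurable[OF continuous_nonzero_set_measurable[OF cont_conj],
          of "\<lambda>P. \<phi> (U ** P ** transpose U) = 0"] by simp
  qed
  define Bad where "Bad U = {P. \<phi> (U ** P ** transpose U) \<noteq> 0}" for U :: "real^'n^'n"
  obtain F where F: "F \<subseteq> Bad ` Collect orthogonal_matrix" "countable F"
    "\<Union>F = \<Union>(Bad ` Collect orthogonal_matrix)"
  proof (rule Lindelof)
    show "open S" if "S \<in> Bad ` Collect orthogonal_matrix" for S
      using that open_Collect_neq[OF cont_conj continuous_on_const] by (auto simp: Bad_def)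
  qed blast
  have "AE P in \<sigma>. \<forall>S\<in>F. P \<notin> S"
    using F(1) conj by (intro AE_ball_countable'[OF _ F(2)]) (auto simp: Bad_def)
  then show ?thesis
    by (rule eventually_mono) (use F(3) in \<open>auto simp: Bad_def\<close>)
qed

text \<open>If \<open>g = \<Sum>\<^sub>i c\<^sub>i (a\<^sub>i \<bullet> x)\<^sup>t\<close> is annihilated by averaging, then
  \<open>\<psi> P = \<Sum>\<^sub>j c\<^sub>j g (P a\<^sub>j)\<close>, a sum of squares with integral zero, vanishes almost everywhere,
  hence, by invariance, on a whole orbit \<open>{U P U\<^sup>T}\<close>; a member of that orbit fixes a point \<open>z\<close> with
  \<open>g z \<noteq> 0\<close>, which contradicts \<open>\<psi> = 0\<close> there.\<close>

lemma average_injective: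
  assumes t: "1 \<le> t" and g: "g \<in> power_forms t" and avg: "average g = 0"
  shows "g = 0"
proof (rule ccontr)
  assume "g \<noteq> 0"
  then obtain z where z: "norm z = 1" "g z \<noteq> 0"
    using power_forms_nonzero_on_sphere[OF t g] by blast
  obtain m :: nat and a c where g_eq: "g = (\<Sum>i=1..m. c i *\<^sub>R power_form (a i) t)"
    using power_forms_indexed_sum[OF g] by metis
  have g_x: "g x = (\<Sum>i=1..m. c i * inner (a i) x ^ t)" for x
    by (simp add: g_eq power_form_def)
  define \<psi> where "\<psi> P = (\<Sum>j=1..m. c j * g (P *v a j))" for P :: "real^'n^'n"
  have int_g: "integrable \<sigma> (\<lambda>P. g (P *v x))" for x
    by (rule integrable_power_forms[OF t g])
  have int_\<psi>: "integrable \<sigma> \<psi>"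
    unfolding \<psi>_def using int_g by auto
  have "integral\<^sup>L \<sigma> \<psi> = (\<Sum>j=1..m. integral\<^sup>L \<sigma> (\<lambda>P. c j * g (P *v a j)))"
    unfolding \<psi>_def by (rule Bochner_Integration.integral_sum) (use int_g in auto)
  also have "\<dots> = (\<Sum>j=1..m. c j * average g (a j))"
    by (simp add: average_def)
  also have "\<dots> = 0"
    by (simp add: avg)
  finally have "integral\<^sup>L \<sigma> \<psi> = 0" .
  moreover have "AE P in \<sigma>. 0 \<le> \<psi> P"
    by (intro AE_I2) (simp add: space_eq \<psi>_def g_x power_sum_projection_nonneg)
  ultimately have "AE P in \<sigma>. \<psi> P = 0"
    using integral_nonneg_eq_0_iff_AE[OF int_\<psi>] by simp
  moreover have "continuous_on UNIV \<psi>"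
    unfolding \<psi>_def g_x inner_vec_def matrix_vector_mult_def by (intro continuous_intros)
  ultimately have ae_conj: "AE P in \<sigma>. \<forall>U. orthogonal_matrix U \<longrightarrow> \<psi> (U ** P ** transpose U) = 0"
    by (intro AE_conjugates)
  obtain P where P: "P \<in> grassmann_proj k" "\<forall>U. orthogonal_matrix U \<longrightarrow> \<psi> (U ** P ** transpose U) = 0"
    using AE_imp_ex[OF ae_conj] space_eq by blast
  obtain U where U: "orthogonal_matrix U" "(U ** P ** transpose U) *v z = z"
    using grassmann_proj_conjugate_fixing[OF P(1) rank_pos z(1)] .
  have "\<psi> (U ** P ** transpose U) = 0"
    using P(2) U(1) by blast
  then have "g ((U ** P ** transpose U) *v z) = 0"
    using power_sum_projection_eq_0[OF grassmann_proj_conjugate[OF U(1) P(1)], of c a t "{1..m}" z]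
    by (simp add: \<psi>_def g_x)
  then show False
    using U(2) z(2) by simp
qed

lemma average_image_power_forms:
  assumes t: "1 \<le> t"
  shows "average ` power_forms t = power_forms t"
  unfolding power_forms_eq_span_monomials[OF t]
proof (rule inj_on_span_imp_image_eq)
  note V = power_forms_eq_span_monomials[OF t, symmetric]
  show "average ` span (word_monomial t ` words t) \<subseteq> span (word_monomial t ` words t)"
    using average_in_power_forms[OF t] by (auto simp: V)
  show "average (g + h) = average g + average h"
    if "g \<in> span (word_monomial t ` words t)" "h \<in> span (word_monomial t ` words t)" for g h
    using that average_add[OF t] by (simp add: V)
  show "inj_on average (span (word_monomial t ` words t))"
  proof (rule inj_onI)
    fix g h assume "g \<in> span (word_monomial t ` words t)" "h \<in> span (word_monomial t ` words t)"
      and eq: "average g = average h"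
    then have g: "g \<in> power_forms t" and h: "h \<in> power_forms t"
      by (simp_all add: V)
    then have gh: "g - h \<in> power_forms t"
      by (simp add: power_forms_def span_diff)
    have "average g = average (g - h) + average h"
      using average_add[OF t gh h] by simp
    then have "average (g - h) = 0"
      using eq by simp
    then show "g = h"
      using average_injective[OF t gh] by simp
  qed
qed (simp_all add: average_scaleR)

lemma moment_Exy: "moment \<sigma> t (Exy x a) = average (power_form a t) x"
  unfolding moment_def average_def power_form_def
  by (rule Bochner_Integration.integral_cong[OF refl]) (simp add: space_eq hs_inner_Exy grassmann_projD)


lemma monomial_moment_expansion:
  assumes t: "1 \<le> t" and \<alpha>: "(\<Sum>i\<in>UNIV. \<alpha> i) = t"
  obtains m :: nat and a c where "1 \<le> m" "\<And>i. norm (a i) = 1"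
    "\<And>x. monomial x \<alpha> = (\<Sum>i=1..m. c i * moment \<sigma> t (Exy x (a i)))"
proof -
  have "(\<lambda>x. monomial x \<alpha>) \<in> average ` power_forms t"
    using monomial_in_power_forms[OF t \<alpha>] average_image_power_forms[OF t] by simp
  then obtain g where g: "g \<in> power_forms t" "(\<lambda>x. monomial x \<alpha>) = average g"
    by blast
  obtain m :: nat and a c where m: "1 \<le> m" and a: "\<And>i. norm (a i) = 1"
    and g_eq: "g = (\<Sum>i=1..m. c i *\<^sub>R power_form (a i) t)"
    using power_forms_indexed_sum[OF g(1)] by metis
  have "monomial x \<alpha> = (\<Sum>i=1..m. c i * moment \<sigma> t (Exy x (a i)))" for x
    using fun_cong[OF g(2), of x] integrable_power_forms[OF t power_form_in_power_forms[OF t]]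
    by (simp add: g_eq average_def moment_Exy)
  then show ?thesis
    using that m a by blast
qed
end

theorem theorem2p1:
  fixes \<sigma> :: "(real^'n^'n) measure" and k t :: nat and \<alpha> :: "'n \<Rightarrow> nat"
  assumes "1 \<le> k" and "k < CARD('n)" and "1 \<le> t"
    and "orth_inv_grassmann_measure k \<sigma>"
    and "(\<Sum>i\<in>UNIV. \<alpha> i) = t"
  shows "\<exists>(m::nat) (y :: nat \<Rightarrow> nat \<Rightarrow> real^'n) (f :: nat \<Rightarrow> nat \<Rightarrow> real).
           1 \<le> m \<and>
           (\<forall>s\<in>{1..t}. \<forall>i\<in>{1..m}. norm (y s i) = 1) \<and>
           (\<forall>x::real^'n. norm x = 1 \<longrightarrow>
              monomial x \<alpha> = (\<Sum>s=1..t. \<Sum>i=1..m. f s i * moment \<sigma> s (Exy x (y s i))))"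
proof -
  interpret grassmann_measure \<sigma> k
    using assms(1,4) by unfold_locales
  obtain m :: nat and a c where m: "1 \<le> m" and a: "\<And>i. norm (a i) = 1"
    and expansion: "\<And>x. monomial x \<alpha> = (\<Sum>i=1..m. c i * moment \<sigma> t (Exy x (a i)))"
    using monomial_moment_expansion[OF assms(3,5)] by metis
  define f where "f s i = (if s = t then c i else 0)" for s i
  have "monomial x \<alpha> = (\<Sum>s=1..t. \<Sum>i=1..m. f s i * moment \<sigma> s (Exy x (a i)))" for x
  proof -
    have "(\<Sum>s=1..t. \<Sum>i=1..m. f s i * moment \<sigma> s (Exy x (a i)))
        = (\<Sum>s=1..t. if s = t then (\<Sum>i=1..m. c i * moment \<sigma> t (Exy x (a i))) else 0)"
      by (intro sum.cong) (auto simp: f_def)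
    also have "\<dots> = monomial x \<alpha>"
      using assms(3) by (simp add: expansion)
    finally show ?thesis
      by simp
  qed
  then show ?thesis
    using m a by (intro exI[of _ m] exI[of _ "\<lambda>_. a"] exI[of _ f]) auto
qed

end
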